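(* Let $\mathbb{F}\in\{\mathbb{R},\mathbb{C}\}$, $A\in\mathbb{F}^{m\times n}$, $b\in\mathbb{F}^m$, $K\ge1$. Let $x'$ be a stationary point of $\mathcal{K}_{K,reg}$ with $\mathrm{card}(x')=K$, set $z'=(I-A^*A)x'+A^*b$, let $\tilde z'$ be the entries of $z'$ sorted by decreasing magnitude, and assume $$|\tilde z'_{K+1}|<(2\beta_{2K}^2-1)|\tilde z'_K|.$$ If $x''\neq x'$ is another stationary point of $\mathcal{K}_{K,reg}$, then $\mathrm{card}(x'')>K$.
   Context: $\mathrm{card}(x)$ is the number of nonzero entries, $P_K=\{x:\mathrm{card}(x)\le K\}$, $\iota_{P_K}$ its indicator function; $\beta_k=\inf\{\|Ax\|_2/\|x\|_2:x\ne0,\ \mathrm{card}(x)\le k\}$. $\mathcal{Q}_2(\iota_{P_K})$ is the function such that $\mathcal{Q}_2(\iota_{P_K})(x)+\|x\|^2$ is the lower semicontinuous convex envelope of $\iota_{P_K}(x)+\|x\|^2$; explicitly, with $\tilde x$ the entries of $x$ sorted so that $|\tilde x_j|$ is non-increasing, $\mathcal{Q}_2(\iota_{P_K})(x)=\frac{1}{k_*}\big(\sum_{j>K-k_*}|\tilde x_j|\big)^2-\sum_{j>K-k_*}|\tilde x_j|^2$, where $k_*$ is the largest $k\in\{1,\dots,K\}$ with $\sum_{j>K-k}|\tilde x_j|-k|\tilde x_{K+1-k}|\ge0$. $\mathcal{K}_{K,reg}(x)=\mathcal{Q}_2(\iota_{P_K})(x)+\|Ax-b\|_2^2$. $A^*$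 is the conjugate transpose. A stationary point of a function $g$ is a point $x$ with $0$ in the Fréchet subdifferential $\hat\partial g(x)$, i.e. the set of $v$ with $\liminf_{y\to x,y\ne x}(g(y)-g(x)-\mathrm{Re}\langle v,y-x\rangle)/\|y-x\|\ge0$. *)

theory Defs
  imports "HOL-Analysis.Analysis" "HOL-Library.Multiset"
begin

text \<open>Entries are over a field 'a which is either real or complex; vectors in F^n are
  'a^'n, matrices in F^(m x n) are 'a^'n^'m.\<close>

definition card_supp :: "'a::zero^'n \<Rightarrow> nat" where
  "card_supp x = card {i. x $ i \<noteq> 0}"

definition sorted_mags :: "'a::real_normed_vector^'n \<Rightarrow> real list" where
  "sorted_mags x = rev (sorted_list_of_multiset (image_mset (\<lambda>i. norm (x $ i)) (mset_set UNIV)))"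

text \<open>|x~_j| for j = 1,2,...; indices beyond the dimension give 0.\<close>
definition mag :: "'a::real_normed_vector^'n \<Rightarrow> nat \<Rightarrow> real" where
  "mag x j = (if 1 \<le> j \<and> j \<le> length (sorted_mags x) then sorted_mags x ! (j - 1) else 0)"

definition kstar :: "nat \<Rightarrow> 'a::real_normed_vector^'n \<Rightarrow> nat" where
  "kstar K x = (GREATEST k. k \<in> {1..K} \<and>
      (\<Sum>j\<in>{K+1-k..CARD('n)+K}. mag x j) - real k * mag x (K + 1 - k) \<ge> 0)"

definition Q2 :: "nat \<Rightarrow> 'a::real_normed_vector^'n \<Rightarrow> real" where
  "Q2 K x = (let k = kstar K x in
      (1 / real k) * (\<Sum>j\<in>{K+1-k..CARD('n)+K}. mag x j)\<^sup>2
      - (\<Sum>j\<in>{K+1-k..CARD('n)+K}. (mag x j)\<^sup>2))"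

definition Kreg :: "nat \<Rightarrow> 'a::{real_normed_field,real_inner}^'n^'m \<Rightarrow> 'a^'m \<Rightarrow> 'a^'n \<Rightarrow> real" where
  "Kreg K A b x = Q2 K x + (norm (A *v x - b))\<^sup>2"

definition beta :: "'a::{real_normed_field,real_inner}^'n^'m \<Rightarrow> nat \<Rightarrow> real" where
  "beta A k = Inf {norm (A *v x) / norm x | x. x \<noteq> 0 \<and> card_supp x \<le> k}"

text \<open>Frechet subdifferential; for vectors over R or C the real inner product of
  'a^'n equals Re <v, y - x>.\<close>
definition frechet_subdiff :: "('v::real_inner \<Rightarrow> real) \<Rightarrow> 'v \<Rightarrow> 'v set" where
  "frechet_subdiff g x = {v. Liminf (at x) (\<lambda>y. ereal ((g y - g x - v \<bullet> (y - x)) / norm (y - x))) \<ge> 0}"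

definition stationary :: "('v::real_inner \<Rightarrow> real) \<Rightarrow> 'v \<Rightarrow> bool" where
  "stationary g x \<longleftrightarrow> 0 \<in> frechet_subdiff g x"

definition cadj :: "complex^'n^'m \<Rightarrow> complex^'m^'n" where
  "cadj A = (\<chi> i j. cnj (A $ j $ i))"

end

theory Submission
  imports Defs
begin

text \<open>Testing \<open>Kreg\<close> along coordinate directions gives first-order conditions at a
  stationary point \<open>x\<close> of cardinality at most \<open>K\<close>: moving inside \<open>P\<^sub>K\<close> keeps
  \<open>Q2\<close> at zero, so \<open>g = A\<^sup>*(Ax - b)\<close> vanishes on the support of \<open>x\<close> (everywhere if
  \<open>card x < K\<close>); leaving the support costs \<open>Q2\<close> only \<open>2|x\<^sub>j||t| + O(t\<^sup>2)\<close>, so every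
  entry of \<open>g\<close> off the support is bounded by every entry of \<open>x\<close> on it. For
  \<open>z = x - g\<close> this means that the support carries the \<open>K\<close> largest entries, with
  \<open>|g\<^sub>l| \<le> |z\<^sub>K\<^sub>+\<^sub>1|\<close> off the support and \<open>|z\<^sub>K| \<le> |x\<^sub>s|\<close> on it.

  For a second stationary point \<open>x''\<close> of cardinality at most \<open>K\<close> put \<open>w = x'' - x'\<close>.
  Then \<open>\<parallel>Aw\<parallel>\<^sup>2 = \<langle>w, g'' - g'\<rangle>\<close>, and the conditions above bound this by a sum over
  the symmetric difference of the supports. Pairing each index of
  \<open>supp x'' - supp x'\<close> injectively with one of \<open>supp x' - supp x''\<close> and using
  \<open>2ac \<le> a\<^sup>2 + c\<^sup>2\<close>, the gap hypothesis makes the sum smaller than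
  \<open>\<beta>\<^sub>2\<^sub>K\<^sup>2 \<parallel>w\<parallel>\<^sup>2\<close>, although \<open>card w \<le> 2K\<close>.\<close>

abbreviation vsupp :: "'a::zero^'n \<Rightarrow> 'n set" where
  "vsupp x \<equiv> {i. x $ i \<noteq> 0}"

lemma length_sorted_mags: "length (sorted_mags (x::'a::real_normed_vector^'n)) = CARD('n)"
proof -
  have "length (sorted_list_of_multiset M) = size M" for M :: "real multiset"
    by (metis mset_sorted_list_of_multiset size_mset)
  then show ?thesis by (simp add: sorted_mags_def)
qed

lemma sorted_wrt_sorted_mags: "sorted_wrt (\<ge>) (sorted_mags x)"
  by (simp add: sorted_mags_def sorted_wrt_rev)

lemma length_filter_sorted_mags:
  "length (filter P (sorted_mags (x::'a::real_normed_vector^'n))) = card {i. P (norm (x $ i))}"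
proof -
  have "length (filter P (sorted_mags x))
      = size (filter_mset P (image_mset (\<lambda>i. norm (x $ i)) (mset_set UNIV)))"
    by (metis mset_filter size_mset sorted_mags_def mset_rev mset_sorted_list_of_multiset)
  also have "\<dots> = size (image_mset (\<lambda>i. norm (x $ i)) (filter_mset (\<lambda>i. P (norm (x $ i))) (mset_set UNIV)))"
    using image_mset_filter_mset_swap[of "\<lambda>i. norm (x $ i)" P "mset_set UNIV"] by simp
  also have "\<dots> = card {i. P (norm (x $ i))}"
    by (simp add: filter_mset_mset_set)
  finally show ?thesis .
qed

lemma mag_nonneg: "0 \<le> mag (x::'a::real_normed_vector^'n) j"
proof -
  have nonneg: "0 \<le> v" if "v \<in> set (sorted_mags x)" for v
    using that by (auto simp: sorted_mags_def)
  show ?thesis unfolding mag_def by (auto intro!: nonneg nth_mem)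
qed

lemma mag_antimono:
  assumes "1 \<le> i" "i \<le> j"
  shows "mag (x::'a::real_normed_vector^'n) j \<le> mag x i"
proof (cases "j \<le> length (sorted_mags x)")
  case True
  have "sorted_mags x ! (j - 1) \<le> sorted_mags x ! (i - 1)"
  proof (cases "i = j")
    case False
    then have "i - 1 < j - 1" using assms by auto
    then show ?thesis using sorted_wrt_sorted_mags[of x] True assms
      by (auto simp: sorted_wrt_iff_nth_less)
  qed simp
  then show ?thesis using True assms by (simp add: mag_def)
next
  case False
  then show ?thesis using mag_nonneg[of x i] by (simp add: mag_def)
qed

lemma mag_le_if_card_less:
  assumes "1 \<le> j" "0 \<le> v" "card {i. norm ((x::'a::real_normed_vector^'n) $ i) > v} < j"
  shows "mag x j \<le> v"
proof (cases "j \<le> length (sorted_mags x)")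
  case True
  show ?thesis
  proof (rule ccontr)
    assume "\<not> ?thesis"
    then have gt: "sorted_mags x ! (j - 1) > v" using True assms by (simp add: mag_def)
    have "{..<j} \<subseteq> {i. i < length (sorted_mags x) \<and> v < sorted_mags x ! i}"
    proof
      fix i assume i: "i \<in> {..<j}"
      then have "sorted_mags x ! (j - 1) \<le> sorted_mags x ! i"
        using sorted_wrt_sorted_mags[of x] True assms
        by (cases "i = j - 1") (auto simp: sorted_wrt_iff_nth_less)
      then show "i \<in> {i. i < length (sorted_mags x) \<and> v < sorted_mags x ! i}"
        using gt True i by auto
    qed
    then have "j \<le> card {i. i < length (sorted_mags x) \<and> v < sorted_mags x ! i}"
      by (metis card_lessThan card_mono finite_Collect_conjI finite_Collect_less_nat)
    also have "\<dots> = card {i. v < norm (x $ i)}"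
      using length_filter_sorted_mags[of "\<lambda>w. v < w" x] by (simp add: length_filter_conv_card)
    finally show False using assms by simp
  qed
next
  case False
  then show ?thesis using assms by (simp add: mag_def)
qed

lemma mag_ge_if_card_ge:
  assumes "1 \<le> j" "j \<le> card {i. v \<le> norm ((x::'a::real_normed_vector^'n) $ i)}"
  shows "v \<le> mag x j"
proof -
  have "card {i. v \<le> norm (x $ i)} \<le> CARD('n)" by (simp add: card_mono)
  then have jl: "j \<le> length (sorted_mags x)" using assms by (simp add: length_sorted_mags)
  show ?thesis
  proof (rule ccontr)
    assume "\<not> ?thesis"
    then have lt: "sorted_mags x ! (j - 1) < v" using jl assms by (simp add: mag_def)
    have "{i. i < length (sorted_mags x) \<and> v \<le> sorted_mags x ! i} \<subseteq> {..<j - 1}"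
    proof
      fix i assume i: "i \<in> {i. i < length (sorted_mags x) \<and> v \<le> sorted_mags x ! i}"
      show "i \<in> {..<j - 1}"
      proof (rule ccontr)
        assume "i \<notin> {..<j - 1}"
        then have "sorted_mags x ! i \<le> sorted_mags x ! (j - 1)"
          using sorted_wrt_sorted_mags[of x] i
          by (cases "i = j - 1") (auto simp: sorted_wrt_iff_nth_less)
        then show False using i lt by auto
      qed
    qed
    then have "card {i. i < length (sorted_mags x) \<and> v \<le> sorted_mags x ! i} \<le> j - 1"
      by (metis card_lessThan card_mono finite_lessThan)
    moreover have "card {i. i < length (sorted_mags x) \<and> v \<le> sorted_mags x ! i}
        = card {i. v \<le> norm (x $ i)}"
      using length_filter_sorted_mags[of "\<lambda>w. v \<le> w" x] by (simp add: length_filter_conv_card)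
    ultimately show False using assms by simp
  qed
qed

lemma mag_eq_0_if_card_supp_less:
  assumes "card_supp (x::'a::real_normed_vector^'n) < j"
  shows "mag x j = 0"
proof -
  have "card {i. norm (x $ i) > 0} < j" using assms by (simp add: card_supp_def)
  then have "mag x j \<le> 0" using assms by (intro mag_le_if_card_less) auto
  then show ?thesis using mag_nonneg[of x j] by simp
qed

lemma kstar_spec:
  assumes "1 \<le> K"
  shows "kstar K (x::'a::real_normed_vector^'n) \<in> {1..K} \<and>
    0 \<le> (\<Sum>j\<in>{K+1-kstar K x..CARD('n)+K}. mag x j) - real (kstar K x) * mag x (K + 1 - kstar K x)"
  unfolding kstar_def
proof (rule GreatestI_nat[where k=1 and b=K])
  have "mag x K \<le> (\<Sum>j\<in>{K..CARD('n)+K}. mag x j)"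
    by (rule member_le_sum) (auto simp: mag_nonneg)
  then show "1 \<in> {1..K} \<and> (\<Sum>j\<in>{K+1-1..CARD('n)+K}. mag x j) - real 1 * mag x (K + 1 - 1) \<ge> 0"
    using assms by simp
qed auto

lemma Q2_nonneg:
  assumes K: "1 \<le> K"
  shows "0 \<le> Q2 K (x::'a::real_normed_vector^'n)"
proof -
  define k where "k = kstar K x"
  define p where "p = K + 1 - k"
  define T where "T = {p..CARD('n)+K}"
  define P where "P = (\<Sum>j\<in>T. mag x j)"
  define Q where "Q = (\<Sum>j\<in>T. (mag x j)\<^sup>2)"
  define a where "a = mag x p"
  have kp: "k \<in> {1..K}" "0 \<le> P - real k * a"
    using kstar_spec[OF K, of x] unfolding k_def p_def T_def P_def a_def by auto
  have "Q \<le> (\<Sum>j\<in>T. a * mag x j)"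
    unfolding Q_def
  proof (rule sum_mono)
    fix j assume "j \<in> T"
    then have "mag x j \<le> a" using kp unfolding T_def a_def p_def by (auto intro: mag_antimono)
    then show "(mag x j)\<^sup>2 \<le> a * mag x j"
      using mag_nonneg[of x j] by (simp add: power2_eq_square mult_right_mono)
  qed
  then have Qa: "Q \<le> a * P" by (simp add: P_def sum_distrib_left)
  have "0 \<le> P" unfolding P_def by (simp add: sum_nonneg mag_nonneg)
  then have "P * (real k * a) \<le> P * P" using kp by (intro mult_left_mono) auto
  then have "real k * (a * P) \<le> P\<^sup>2" by (simp add: power2_eq_square algebra_simps)
  then have "a * P \<le> P\<^sup>2 / real k" using kp by (simp add: field_simps)
  moreover have "Q2 K x = P\<^sup>2 / real k - Q"
    unfolding Q2_def Let_def P_def Q_def T_def p_def k_def by simp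
  ultimately show ?thesis using Qa by simp
qed

lemma sum_mag_cutoff:
  assumes "card_supp (x::'a::real_normed_vector^'n) \<le> N" "N \<le> M" "f 0 = 0"
  shows "(\<Sum>j\<in>{p..M}. f (mag x j)) = (\<Sum>j\<in>{p..N}. f (mag x j))"
  using assms mag_eq_0_if_card_supp_less[of x] by (intro sum.mono_neutral_right) auto

lemma kstar_head_le:
  assumes K: "1 \<le> K" and card: "card_supp (x::'a::real_normed_vector^'n) \<le> K + 1"
  shows "mag x (K + 1 - kstar K x) \<le> mag x K + mag x (K + 1)"
proof -
  define k where "k = kstar K x"
  define p where "p = K + 1 - k"
  define a where "a = mag x p"
  have k: "k \<in> {1..K}" and gap: "real k * a \<le> (\<Sum>j\<in>{p..CARD('n)+K}. mag x j)"
    using kstar_spec[OF K, of x] unfolding k_def p_def a_def by auto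
  have "(\<Sum>j\<in>{p..CARD('n)+K}. mag x j) = (\<Sum>j\<in>{p..K + 1}. mag x j)"
    using sum_mag_cutoff[OF card, of "CARD('n) + K" "\<lambda>v. v"] by simp
  also have "\<dots> = (\<Sum>j\<in>{p..K - 1}. mag x j) + mag x K + mag x (K + 1)"
    using k K unfolding p_def by (cases K) (auto simp: sum.cl_ivl_Suc)
  finally have sum_eq: "(\<Sum>j\<in>{p..CARD('n)+K}. mag x j)
      = (\<Sum>j\<in>{p..K - 1}. mag x j) + mag x K + mag x (K + 1)" .
  have "(\<Sum>j\<in>{p..K - 1}. mag x j) \<le> (\<Sum>j\<in>{p..K - 1}. a)"
    using k unfolding a_def p_def by (intro sum_mono mag_antimono) auto
  also have "\<dots> = (real k - 1) * a" using k unfolding p_def by (simp add: of_nat_diff)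
  finally show ?thesis using gap sum_eq by (simp add: k_def p_def a_def algebra_simps)
qed

text \<open>Only the sorted magnitudes \<open>K + 1 - k\<^sub>*, \<dots>, K + 1\<close> enter \<open>Q2 K x\<close>; Cauchy-Schwarz
  handles the first \<open>k\<^sub>*\<close> of them, which are capped by \<open>kstar_head_le\<close>.\<close>
lemma Q2_le:
  assumes K: "1 \<le> K" and card: "card_supp (x::'a::real_normed_vector^'n) \<le> K + 1"
  shows "Q2 K x \<le> 2 * (mag x K + mag x (K + 1)) * mag x (K + 1)"
proof -
  define k where "k = kstar K x"
  define p where "p = K + 1 - k"
  define e where "e = mag x (K + 1)"
  define P0 where "P0 = (\<Sum>j\<in>{p..K}. mag x j)"
  define Q0 where "Q0 = (\<Sum>j\<in>{p..K}. (mag x j)\<^sup>2)"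
  have k: "k \<in> {1..K}" using kstar_spec[OF K, of x] unfolding k_def by auto
  then have k1: "1 \<le> real k" and card_k: "card {p..K} = k" by (auto simp: p_def)
  have cutoff: "(\<Sum>j\<in>{p..CARD('n)+K}. f (mag x j)) = (\<Sum>j\<in>{p..K}. f (mag x j)) + f e"
    if "f 0 = 0" for f
    using sum_mag_cutoff[OF card, of "CARD('n) + K" f p] that k
    by (auto simp: sum.cl_ivl_Suc e_def p_def)
  have "Q2 K x = (P0 + e)\<^sup>2 / real k - (Q0 + e\<^sup>2)"
    using cutoff[of "\<lambda>v. v"] cutoff[of "\<lambda>v. v\<^sup>2"]
    unfolding Q2_def Let_def P0_def Q0_def k_def p_def by simp
  also have "\<dots> = ((P0\<^sup>2 - Q0 * real k) + 2 * P0 * e - (real k - 1) * e\<^sup>2) / real k"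
    using k1 by (simp add: field_simps power2_eq_square)
  also have "\<dots> \<le> 2 * P0 * e / real k"
  proof -
    have "P0\<^sup>2 \<le> Q0 * real k"
      unfolding P0_def Q0_def using sum_squared_le_sum_of_squares[of "mag x" "{p..K}"] card_k by simp
    moreover have "0 \<le> (real k - 1) * e\<^sup>2" using k1 by simp
    ultimately have "(P0\<^sup>2 - Q0 * real k) + 2 * P0 * e - (real k - 1) * e\<^sup>2 \<le> 2 * P0 * e"
      by linarith
    then show ?thesis using k1 by (intro divide_right_mono) auto
  qed
  also have "\<dots> \<le> 2 * (mag x K + e) * e"
  proof -
    have "P0 \<le> (\<Sum>j\<in>{p..K}. mag x K + e)"
      unfolding P0_def e_def
      using kstar_head_le[OF K card] mag_antimono[of "K + 1 - kstar K x" _ x] k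
      by (intro sum_mono) (force simp: k_def p_def)
    then have "P0 \<le> real k * (mag x K + e)" using card_k by simp
    then have "2 * P0 * e \<le> 2 * (real k * (mag x K + e)) * e"
      using mag_nonneg[of x "K + 1"] by (simp add: e_def mult_right_mono)
    then show ?thesis using k1 by (simp add: divide_le_eq algebra_simps)
  qed
  finally show ?thesis unfolding e_def .
qed

lemma Q2_eq_0:
  assumes "1 \<le> K" "card_supp (x::'a::real_normed_vector^'n) \<le> K"
  shows "Q2 K x = 0"
  using Q2_le[OF assms(1), of x] Q2_nonneg[OF assms(1), of x] assms(2)
    mag_eq_0_if_card_supp_less[of x "K + 1"] by simp

lemma stationary_directional_nonneg:
  fixes F :: "'v::real_inner \<Rightarrow> real"
  assumes st: "stationary F x" and d: "d \<noteq> 0"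
    and ev: "\<forall>\<^sub>F t in at_right 0. F (x + t *\<^sub>R d) - F x \<le> t * h t"
    and lim: "(h \<longlongrightarrow> L) (at_right 0)"
  shows "0 \<le> L"
proof (rule ccontr)
  assume "\<not> 0 \<le> L"
  then have L: "L < 0" by simp
  have nd: "0 < norm d" using d by simp
  define c where "c = L / (2 * norm d)"
  have "c < 0" unfolding c_def using L nd by (simp add: divide_neg_pos)
  moreover have "\<forall>y<0. \<forall>\<^sub>F z in at x. y < ereal ((F z - F x) / norm (z - x))"
    using st by (simp add: stationary_def frechet_subdiff_def le_Liminf_iff)
  ultimately have "\<forall>\<^sub>F z in at x. ereal c < ereal ((F z - F x) / norm (z - x))"
    by (metis zero_ereal_def less_ereal.simps(1))
  then have ev_x: "\<forall>\<^sub>F z in at x. c < (F z - F x) / norm (z - x)"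
    by simp
  have "filterlim (\<lambda>t. x + t *\<^sub>R d) (at x) (at_right 0)"
  proof (rule filterlim_at[THEN iffD2], rule conjI)
    show "\<forall>\<^sub>F t in at_right 0. x + t *\<^sub>R d \<in> UNIV \<and> x + t *\<^sub>R d \<noteq> x"
      using eventually_at_right_less[of "0::real"] by eventually_elim (use d in auto)
    have "((\<lambda>t. x + t *\<^sub>R d) \<longlongrightarrow> x + 0 *\<^sub>R d) (at_right (0::real))"
      by (intro tendsto_intros)
    then show "((\<lambda>t. x + t *\<^sub>R d) \<longlongrightarrow> x) (at_right (0::real))" by simp
  qed
  from eventually_compose_filterlim[OF ev_x this]
  have ev_line: "\<forall>\<^sub>F t in at_right 0. c < (F (x + t *\<^sub>R d) - F x) / norm (t *\<^sub>R d)"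
    by simp
  have "L < L / 2" using L by simp
  from order_tendstoD(2)[OF lim this] have ev_h: "\<forall>\<^sub>F t in at_right 0. h t < L / 2" .
  have "\<forall>\<^sub>F t in at_right (0::real). False"
    using ev ev_line ev_h eventually_at_right_less[of "0::real"]
  proof eventually_elim
    case (elim t)
    then have "c * (t * norm d) < F (x + t *\<^sub>R d) - F x"
      using nd by (simp add: pos_less_divide_eq)
    moreover have "c * (t * norm d) = t * (L / 2)" unfolding c_def using nd by (simp add: field_simps)
    moreover have "t * h t < t * (L / 2)" using elim by simp
    ultimately show False using elim(1) by simp
  qed
  then show False by (simp add: trivial_limit_at_right_real)
qed

lemma norm_matrix_vector_line_sq:
  fixes A :: "'a::{real_normed_field,real_inner}^'n^'m"
  shows "(norm (A *v (x + t *\<^sub>R d) - b))\<^sup>2 = (norm (A *v x - b))\<^sup>2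
     + 2 * t * ((A *v d) \<bullet> (A *v x - b)) + t\<^sup>2 * (norm (A *v d))\<^sup>2"
proof -
  define r where "r = A *v x - b"
  define c where "c = A *v d"
  have "A *v (t *\<^sub>R d) = t *\<^sub>R c"
    unfolding c_def by (simp add: vec_eq_iff matrix_vector_mult_def scaleR_sum_right)
  then have "A *v (x + t *\<^sub>R d) - b = r + t *\<^sub>R c"
    unfolding r_def by (simp add: matrix_vector_right_distrib)
  then have "(norm (A *v (x + t *\<^sub>R d) - b))\<^sup>2 = (r + t *\<^sub>R c) \<bullet> (r + t *\<^sub>R c)"
    by (simp add: power2_norm_eq_inner)
  also have "\<dots> = r \<bullet> r + 2 * t * (c \<bullet> r) + t\<^sup>2 * (c \<bullet> c)"
    by (simp add: inner_add_left inner_add_right inner_commute power2_eq_square algebra_simps)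
  finally show ?thesis by (simp add: r_def c_def power2_norm_eq_inner)
qed

lemma Kreg_line_diff:
  fixes A :: "'a::{real_normed_field,real_inner}^'n^'m" and As :: "'a^'m^'n"
  assumes adj: "\<And>d r. (A *v d) \<bullet> r = d \<bullet> (As *v r)"
  shows "Kreg K A b (x + t *\<^sub>R d) - Kreg K A b x = Q2 K (x + t *\<^sub>R d) - Q2 K x
    + 2 * t * (d \<bullet> (As *v (A *v x - b))) + t\<^sup>2 * (norm (A *v d))\<^sup>2"
  unfolding Kreg_def norm_matrix_vector_line_sq adj by simp

lemma scaleR_axis: "t *\<^sub>R axis i u = axis i (t *\<^sub>R u)"
  by (simp add: vec_eq_iff axis_def)

lemma stationary_Kreg_grad_eq_0:
  fixes A :: "'a::{real_normed_field,real_inner}^'n^'m" and As :: "'a^'m^'n"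
  assumes adj: "\<And>d r. (A *v d) \<bullet> r = d \<bullet> (As *v r)"
    and K: "1 \<le> K" and st: "stationary (Kreg K A b) x" and card: "card_supp x \<le> K"
    and i: "x $ i \<noteq> 0 \<or> card_supp x < K"
  shows "(As *v (A *v x - b)) $ i = 0"
proof -
  define g where "g = As *v (A *v x - b)"
  define d where "d = axis i (- g $ i)"
  have card_line: "card_supp (x + t *\<^sub>R d) \<le> K" for t
  proof -
    have "vsupp (x + t *\<^sub>R d) \<subseteq> insert i (vsupp x)"
      by (auto simp: d_def axis_def)
    moreover have "card (insert i (vsupp x)) \<le> K"
      using i card by (cases "x $ i = 0") (auto simp: card_supp_def card_insert_if)
    ultimately have "card (vsupp (x + t *\<^sub>R d)) \<le> card (insert i (vsupp x))"
      by (intro card_mono) auto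
    with \<open>card (insert i (vsupp x)) \<le> K\<close> show ?thesis by (simp add: card_supp_def)
  qed
  have line: "Kreg K A b (x + t *\<^sub>R d) - Kreg K A b x = 2 * t * (d \<bullet> g) + t\<^sup>2 * (norm (A *v d))\<^sup>2"
    for t
    using Kreg_line_diff[OF adj, of K b x t d, folded g_def] Q2_eq_0[OF K card_line] Q2_eq_0[OF K card]
    by simp
  have "2 * t * (d \<bullet> g) + t\<^sup>2 * (norm (A *v d))\<^sup>2 = t * (2 * (d \<bullet> g) + t * (norm (A *v d))\<^sup>2)"
    for t :: real
    by (simp add: power2_eq_square algebra_simps)
  with line have ev: "\<forall>\<^sub>F t in at_right 0. Kreg K A b (x + t *\<^sub>R d) - Kreg K A b x
      \<le> t * (2 * (d \<bullet> g) + t * (norm (A *v d))\<^sup>2)"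
    by simp
  have lim: "((\<lambda>t. 2 * (d \<bullet> g) + t * (norm (A *v d))\<^sup>2) \<longlongrightarrow> 2 * (d \<bullet> g) + 0 * (norm (A *v d))\<^sup>2)
      (at_right 0)"
    by (intro tendsto_intros)
  show ?thesis
  proof (rule ccontr)
    assume gi: "(As *v (A *v x - b)) $ i \<noteq> 0"
    then have "d \<noteq> 0" by (simp add: d_def g_def)
    from stationary_directional_nonneg[OF st this ev lim]
    have "(norm (g $ i))\<^sup>2 \<le> 0"
      by (simp add: d_def inner_axis' power2_norm_eq_inner)
    then show False using gi by (simp add: g_def)
  qed
qed

text \<open>Adding the entry \<open>v\<close> to \<open>x \<in> P\<^sub>K\<close> outside its support, with \<open>|v|\<close> below the
  magnitude of a support entry \<open>x\<^sub>j\<close>, leaves \<open>|x\<^sub>j|\<close> as an upper bound of the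
  \<open>K\<close>-th and \<open>|v|\<close> of the \<open>(K+1)\<close>-th largest magnitude.\<close>
lemma Q2_add_axis_le:
  assumes K: "1 \<le> K" and card: "card_supp (x::'a::real_normed_vector^'n) = K"
    and xi: "x $ i = 0" and xj: "x $ j \<noteq> 0" and v: "norm v < norm (x $ j)"
  shows "Q2 K (x + axis i v) \<le> 2 * (norm (x $ j) + norm v) * norm v"
proof -
  define y where "y = x + axis i v"
  have y: "y $ l = (if l = i then v else x $ l)" for l
    using xi by (simp add: y_def axis_def)
  have "vsupp y \<subseteq> insert i (vsupp x)" by (auto simp: y)
  then have "card (vsupp y) \<le> card (insert i (vsupp x))" by (intro card_mono) auto
  also have "\<dots> \<le> K + 1" using card by (simp add: card_supp_def card_insert_if)
  finally have "card_supp y \<le> K + 1" by (simp add: card_supp_def)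
  note Q2_y = Q2_le[OF K this]
  have mag_K: "mag y K \<le> norm (x $ j)"
  proof (rule mag_le_if_card_less)
    have "{l. norm (y $ l) > norm (x $ j)} \<subseteq> vsupp x - {j}"
      using v by (auto simp: y split: if_splits)
    then have "card {l. norm (y $ l) > norm (x $ j)} \<le> card (vsupp x - {j})"
      by (intro card_mono) auto
    also have "\<dots> < K" using card xj K by (simp add: card_supp_def)
    finally show "card {l. norm (y $ l) > norm (x $ j)} < K" .
  qed (use K in auto)
  have mag_Suc_K: "mag y (K + 1) \<le> norm v"
  proof (rule mag_le_if_card_less)
    have "{l. norm (y $ l) > norm v} \<subseteq> vsupp x" by (auto simp: y split: if_splits)
    then have "card {l. norm (y $ l) > norm v} \<le> card (vsupp x)"
      by (intro card_mono) auto
    then show "card {l. norm (y $ l) > norm v} < K + 1" using card by (simp add: card_supp_def)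
  qed auto
  have "2 * (mag y K + mag y (K + 1)) * mag y (K + 1) \<le> 2 * (norm (x $ j) + norm v) * norm v"
    using mag_K mag_Suc_K mag_nonneg[of y] by (intro mult_mono add_mono) auto
  then show ?thesis using Q2_y by (simp add: y_def)
qed

lemma Kreg_add_axis_diff_le:
  fixes A :: "'a::{real_normed_field,real_inner}^'n^'m" and As :: "'a^'m^'n"
  assumes adj: "\<And>d r. (A *v d) \<bullet> r = d \<bullet> (As *v r)"
    and K: "1 \<le> K" and card: "card_supp x = K" and xi: "x $ i = 0" and xj: "x $ j \<noteq> 0"
    and t: "0 < t" "t * norm u < norm (x $ j)"
  shows "Kreg K A b (x + t *\<^sub>R axis i u) - Kreg K A b x
    \<le> t * (2 * (norm (x $ j) + t * norm u) * norm u
      + 2 * (axis i u \<bullet> (As *v (A *v x - b))) + t * (norm (A *v axis i u))\<^sup>2)"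
proof -
  have "Q2 K (x + t *\<^sub>R axis i u) \<le> 2 * (norm (x $ j) + t * norm u) * (t * norm u)"
    using Q2_add_axis_le[OF K card xi xj, of "t *\<^sub>R u"] t by (simp add: scaleR_axis)
  then show ?thesis
    using Kreg_line_diff[OF adj, of K b x t "axis i u"] Q2_eq_0[OF K card[THEN eq_imp_le]]
    by (simp add: power2_eq_square algebra_simps)
qed

lemma stationary_Kreg_grad_le_support_entry:
  fixes A :: "'a::{real_normed_field,real_inner}^'n^'m" and As :: "'a^'m^'n"
  assumes adj: "\<And>d r. (A *v d) \<bullet> r = d \<bullet> (As *v r)"
    and K: "1 \<le> K" and st: "stationary (Kreg K A b) x" and card: "card_supp x = K"
    and xi: "x $ i = 0" and xj: "x $ j \<noteq> 0"
  shows "norm ((As *v (A *v x - b)) $ i) \<le> norm (x $ j)"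
proof (rule ccontr)
  define g where "g = As *v (A *v x - b)"
  define m where "m = norm (x $ j)"
  define n where "n = norm (g $ i)"
  define d where "d = axis i (- g $ i)"
  assume "\<not> ?thesis"
  then have m_n: "m < n" by (simp add: g_def m_def n_def)
  have m: "0 < m" using xj by (simp add: m_def)
  then have n: "0 < n" using m_n by simp
  then have d: "d \<noteq> 0" by (auto simp: d_def n_def)
  define h where "h t = 2 * (m + t * n) * n + 2 * (d \<bullet> g) + t * (norm (A *v d))\<^sup>2" for t
  have "\<forall>\<^sub>F t in at_right 0. t < m / n"
    using order_tendstoD(2)[OF tendsto_ident_at[of "0::real" "{0<..}"], of "m / n"] m m_n by simp
  then have ev: "\<forall>\<^sub>F t in at_right 0. Kreg K A b (x + t *\<^sub>R d) - Kreg K A b x \<le> t * h t"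
    using eventually_at_right_less[of "0::real"]
  proof eventually_elim
    case (elim t)
    then have "t * norm (- g $ i) < norm (x $ j)"
      using n by (simp add: pos_less_divide_eq n_def m_def)
    from Kreg_add_axis_diff_le[OF adj K card xi xj _ this] elim show ?case
      by (simp add: h_def d_def g_def m_def n_def)
  qed
  have "(h \<longlongrightarrow> 2 * (m + 0 * n) * n + 2 * (d \<bullet> g) + 0 * (norm (A *v d))\<^sup>2) (at_right 0)"
    unfolding h_def by (intro tendsto_intros)
  from stationary_directional_nonneg[OF st d ev this]
  have "0 \<le> 2 * m * n + 2 * (d \<bullet> g)" by simp
  moreover have "d \<bullet> g = - n\<^sup>2" by (simp add: d_def n_def inner_axis' power2_norm_eq_inner)
  ultimately have "0 \<le> n * (m - n)" by (simp add: power2_eq_square algebra_simps)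
  then show False using m m_n by (simp add: zero_le_mult_iff)
qed

text \<open>First-order conditions of \<open>Kreg K A b\<close> at a point \<open>x \<in> P\<^sub>K\<close>, where \<open>g\<close> stands
  for \<open>A\<^sup>*(Ax - b)\<close>, half the gradient of the data term.\<close>
definition sparse_critical :: "nat \<Rightarrow> 'a::real_normed_vector^'n \<Rightarrow> 'a^'n \<Rightarrow> bool" where
  "sparse_critical K x g \<longleftrightarrow> card_supp x \<le> K \<and>
     (\<forall>l. x $ l \<noteq> 0 \<or> card_supp x < K \<longrightarrow> g $ l = 0) \<and>
     (card_supp x = K \<longrightarrow> (\<forall>l s. x $ l = 0 \<longrightarrow> x $ s \<noteq> 0 \<longrightarrow> norm (g $ l) \<le> norm (x $ s)))"

lemma stationary_Kreg_sparse_critical: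
  fixes A :: "'a::{real_normed_field,real_inner}^'n^'m" and As :: "'a^'m^'n"
  assumes adj: "\<And>d r. (A *v d) \<bullet> r = d \<bullet> (As *v r)"
    and K: "1 \<le> K" and st: "stationary (Kreg K A b) x" and card: "card_supp x \<le> K"
  shows "sparse_critical K x (As *v (A *v x - b))"
  using card stationary_Kreg_grad_eq_0[OF adj K st card]
    stationary_Kreg_grad_le_support_entry[OF adj K st]
  unfolding sparse_critical_def by blast

lemma sparse_critical_grad_le_mag_Suc:
  fixes x g :: "'a::real_normed_vector^'n"
  assumes crit: "sparse_critical K x g" and card: "card_supp x = K" and l: "x $ l = 0"
  shows "norm (g $ l) \<le> mag (x - g) (K + 1)"
proof (rule mag_ge_if_card_ge)
  have "insert l (vsupp x) \<subseteq> {i. norm (g $ l) \<le> norm ((x - g) $ i)}"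
    using crit card l by (auto simp: sparse_critical_def)
  then have "card (insert l (vsupp x)) \<le> card {i. norm (g $ l) \<le> norm ((x - g) $ i)}"
    by (intro card_mono) auto
  then show "K + 1 \<le> card {i. norm (g $ l) \<le> norm ((x - g) $ i)}"
    using card l by (simp add: card_supp_def)
qed simp

lemma sparse_critical_mag_le_support_entry:
  fixes x g :: "'a::real_normed_vector^'n"
  assumes crit: "sparse_critical K x g" and card: "card_supp x = K" and K: "1 \<le> K"
    and s: "x $ s \<noteq> 0"
  shows "mag (x - g) K \<le> norm (x $ s)"
proof (rule mag_le_if_card_less)
  have "{i. norm (x $ s) < norm ((x - g) $ i)} \<subseteq> vsupp x - {s}"
  proof
    fix i assume i: "i \<in> {i. norm (x $ s) < norm ((x - g) $ i)}"
    have "norm (g $ i) \<le> norm (x $ s)" if "x $ i = 0"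
      using crit card s that by (simp add: sparse_critical_def)
    moreover have "g $ i = 0" if "x $ i \<noteq> 0"
      using crit that by (simp add: sparse_critical_def)
    ultimately show "i \<in> vsupp x - {s}"
      using i by (cases "x $ i = 0") auto
  qed
  then have "card {i. norm (x $ s) < norm ((x - g) $ i)} \<le> card (vsupp x - {s})"
    by (intro card_mono) auto
  then show "card {i. norm (x $ s) < norm ((x - g) $ i)} < K"
    using card s K by (simp add: card_supp_def)
qed (use K in auto)

lemma inner_diff_le_sum_sym_diff:
  fixes x1 x2 g1 g2 :: "'a::real_inner^'n"
  assumes g1: "\<And>l. x1 $ l \<noteq> 0 \<Longrightarrow> g1 $ l = 0" and g2: "\<And>l. x2 $ l \<noteq> 0 \<Longrightarrow> g2 $ l = 0"
    and \<rho>: "\<And>l. x1 $ l = 0 \<Longrightarrow> norm (g1 $ l) \<le> \<rho>"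
  shows "(x2 - x1) \<bullet> (g2 - g1) \<le> (\<Sum>l\<in>vsupp x1 - vsupp x2. norm (x1 $ l) * norm (g2 $ l))
    + (\<Sum>l\<in>vsupp x2 - vsupp x1. norm (x2 $ l) * \<rho>)"
proof -
  define S where "S = vsupp x1"
  define T where "T = vsupp x2"
  have "(x2 - x1) \<bullet> (g2 - g1) = (\<Sum>l\<in>UNIV. (x2 $ l - x1 $ l) \<bullet> (g2 $ l - g1 $ l))"
    by (simp add: inner_vec_def)
  also have "\<dots> \<le> (\<Sum>l\<in>UNIV. (if l \<in> S - T then norm (x1 $ l) * norm (g2 $ l) else 0)
      + (if l \<in> T - S then norm (x2 $ l) * \<rho> else 0))"
  proof (rule sum_mono)
    fix l
    consider "l \<in> S - T" | "l \<in> T - S" | "l \<notin> S \<union> T \<or> l \<in> S \<inter> T"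
      by blast
    then show "(x2 $ l - x1 $ l) \<bullet> (g2 $ l - g1 $ l)
      \<le> (if l \<in> S - T then norm (x1 $ l) * norm (g2 $ l) else 0)
        + (if l \<in> T - S then norm (x2 $ l) * \<rho> else 0)"
    proof cases
      case 1
      then show ?thesis
        using g1 norm_cauchy_schwarz[of "- x1 $ l" "g2 $ l"] by (simp add: S_def T_def)
    next
      case 2
      then have "(x2 $ l - x1 $ l) \<bullet> (g2 $ l - g1 $ l) \<le> norm (x2 $ l) * norm (g1 $ l)"
        using g2 norm_cauchy_schwarz[of "x2 $ l" "- g1 $ l"] by (simp add: S_def T_def)
      also have "\<dots> \<le> norm (x2 $ l) * \<rho>"
        using 2 \<rho> by (intro mult_left_mono) (auto simp: S_def)
      finally show ?thesis using 2 by simp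
    next
      case 3
      then show ?thesis using g1 g2 by (auto simp: S_def T_def)
    qed
  qed
  also have "\<dots> = (\<Sum>l\<in>S - T. norm (x1 $ l) * norm (g2 $ l)) + (\<Sum>l\<in>T - S. norm (x2 $ l) * \<rho>)"
    by (simp only: sum.distrib sum.inter_restrict[OF finite_class.finite_UNIV, symmetric]
        Int_UNIV_left)
  finally show ?thesis unfolding S_def T_def .
qed

lemma sparse_critical_sum_grad_le_paired:
  fixes x g :: "'a::real_normed_vector^'n" and f :: "'n \<Rightarrow> real"
  assumes crit: "sparse_critical K x g" and S: "card S = K"
    and \<sigma>: "\<sigma> ` (vsupp x - S) \<subseteq> S - vsupp x" "inj_on \<sigma> (vsupp x - S)"
    and f: "\<And>l. 0 \<le> f l"
  shows "(\<Sum>l\<in>S - vsupp x. f l * norm (g $ l)) \<le> (\<Sum>t\<in>vsupp x - S. f (\<sigma> t) * norm (x $ t))"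
proof (cases "card_supp x = K")
  case True
  have "card (vsupp x - S) = card (S - vsupp x)"
    using True S by (simp add: card_Diff_subset_Int Int_commute card_supp_def)
  then have "\<sigma> ` (vsupp x - S) = S - vsupp x"
    using \<sigma> by (intro card_subset_eq) (auto simp: card_image)
  then have "(\<Sum>l\<in>S - vsupp x. f l * norm (g $ l)) = (\<Sum>t\<in>vsupp x - S. f (\<sigma> t) * norm (g $ \<sigma> t))"
    using sum.reindex[OF \<sigma>(2), of "\<lambda>l. f l * norm (g $ l)"] by simp
  also have "\<dots> \<le> (\<Sum>t\<in>vsupp x - S. f (\<sigma> t) * norm (x $ t))"
  proof (rule sum_mono)
    fix t assume t: "t \<in> vsupp x - S"
    then have "x $ \<sigma> t = 0" using \<sigma>(1) by auto
    then have "norm (g $ \<sigma> t) \<le> norm (x $ t)"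
      using crit True t by (simp add: sparse_critical_def)
    then show "f (\<sigma> t) * norm (g $ \<sigma> t) \<le> f (\<sigma> t) * norm (x $ t)"
      using f by (rule mult_left_mono)
  qed
  finally show ?thesis .
next
  case False
  then have "g = 0" using crit by (auto simp: sparse_critical_def vec_eq_iff)
  then show ?thesis by (simp add: sum_nonneg f)
qed

lemma sum_paired_sq_le_norm_diff_sq:
  fixes x y :: "'a::real_inner^'n"
  assumes \<sigma>: "\<sigma> ` (vsupp y - vsupp x) \<subseteq> vsupp x - vsupp y" "inj_on \<sigma> (vsupp y - vsupp x)"
  shows "(\<Sum>t\<in>vsupp y - vsupp x. (norm (y $ t))\<^sup>2 + (norm (x $ \<sigma> t))\<^sup>2) \<le> (norm (y - x))\<^sup>2"
proof -
  define D where "D = vsupp y - vsupp x"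
  define E where "E = vsupp x - vsupp y"
  have "(\<Sum>t\<in>D. (norm (x $ \<sigma> t))\<^sup>2) = (\<Sum>l\<in>\<sigma> ` D. (norm (x $ l))\<^sup>2)"
    using sum.reindex[OF \<sigma>(2), of "\<lambda>l. (norm (x $ l))\<^sup>2"] by (simp add: D_def)
  also have "\<dots> \<le> (\<Sum>l\<in>E. (norm (x $ l))\<^sup>2)"
    using \<sigma>(1) by (intro sum_mono2) (auto simp: D_def E_def)
  finally have "(\<Sum>t\<in>D. (norm (y $ t))\<^sup>2 + (norm (x $ \<sigma> t))\<^sup>2)
      \<le> (\<Sum>l\<in>D. (norm ((y - x) $ l))\<^sup>2) + (\<Sum>l\<in>E. (norm ((y - x) $ l))\<^sup>2)"
    by (simp add: sum.distrib D_def E_def)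
  also have "\<dots> = (\<Sum>l\<in>D \<union> E. (norm ((y - x) $ l))\<^sup>2)"
    by (rule sum.union_disjoint[symmetric]) (auto simp: D_def E_def)
  also have "\<dots> \<le> (\<Sum>l\<in>UNIV. (norm ((y - x) $ l))\<^sup>2)"
    by (rule sum_mono2) auto
  also have "\<dots> = (norm (y - x))\<^sup>2"
    by (simp add: power2_norm_eq_inner inner_vec_def)
  finally show ?thesis unfolding D_def .
qed

text \<open>Each summand is bounded via \<open>\<rho> < (2\<beta>\<^sup>2 - 1) c\<close> and \<open>2ac \<le> a\<^sup>2 + c\<^sup>2\<close>.\<close>
lemma sum_paired_lt:
  fixes a c :: "'i \<Rightarrow> real"
  assumes "finite D" "D \<noteq> {}" and \<gamma>: "0 \<le> 2 * \<beta>\<^sup>2 - 1" and \<rho>: "\<rho> < (2 * \<beta>\<^sup>2 - 1) * \<mu>"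
    and a: "\<And>t. t \<in> D \<Longrightarrow> 0 < a t" and c: "\<And>t. t \<in> D \<Longrightarrow> \<mu> \<le> c t"
  shows "(\<Sum>t\<in>D. c t * a t + a t * \<rho>) < \<beta>\<^sup>2 * (\<Sum>t\<in>D. (a t)\<^sup>2 + (c t)\<^sup>2)"
proof -
  have "c t * a t + a t * \<rho> < \<beta>\<^sup>2 * ((a t)\<^sup>2 + (c t)\<^sup>2)" if t: "t \<in> D" for t
  proof -
    have "a t * \<rho> < a t * ((2 * \<beta>\<^sup>2 - 1) * \<mu>)"
      using \<rho> a[OF t] by simp
    moreover have "a t * ((2 * \<beta>\<^sup>2 - 1) * \<mu>) \<le> a t * ((2 * \<beta>\<^sup>2 - 1) * c t)"
      using a[OF t] c[OF t] \<gamma> by (intro mult_left_mono) auto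
    moreover have "\<beta>\<^sup>2 * (2 * (a t * c t)) \<le> \<beta>\<^sup>2 * ((a t)\<^sup>2 + (c t)\<^sup>2)"
      using sum_squares_bound[of "a t" "c t"] by (intro mult_left_mono) auto
    ultimately show ?thesis by (simp add: algebra_simps)
  qed
  then have "(\<Sum>t\<in>D. c t * a t + a t * \<rho>) < (\<Sum>t\<in>D. \<beta>\<^sup>2 * ((a t)\<^sup>2 + (c t)\<^sup>2))"
    using assms(1,2) by (intro sum_strict_mono) auto
  then show ?thesis by (simp add: sum_distrib_left)
qed

lemma beta_sq_mult_le:
  fixes A :: "'a::{real_normed_field,real_inner}^'n^'m"
  assumes "x \<noteq> 0" "card_supp x \<le> k"
  shows "(beta A k)\<^sup>2 * (norm x)\<^sup>2 \<le> (norm (A *v x))\<^sup>2"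
proof -
  define B where "B = {norm (A *v x) / norm x | x. x \<noteq> 0 \<and> card_supp x \<le> k}"
  have x: "norm (A *v x) / norm x \<in> B" unfolding B_def using assms by blast
  have bdd: "bdd_below B" unfolding B_def by (rule bdd_belowI[of _ 0]) auto
  have "0 \<le> beta A k"
    unfolding beta_def B_def[symmetric] by (rule cInf_greatest) (use x in auto, auto simp: B_def)
  moreover have "beta A k \<le> norm (A *v x) / norm x"
    unfolding beta_def B_def[symmetric] by (rule cInf_lower[OF x bdd])
  then have "beta A k * norm x \<le> norm (A *v x)"
    using assms by (simp add: pos_le_divide_eq)
  ultimately show ?thesis
    by (metis power_mono power_mult_distrib mult_nonneg_nonneg norm_ge_zero)
qed

lemma card_supp_diff_le: "card_supp (x - y) \<le> card_supp x + card_supp (y::'a::ab_group_add^'n)"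
proof -
  have "vsupp (x - y) \<subseteq> vsupp x \<union> vsupp y" by auto
  then have "card (vsupp (x - y)) \<le> card (vsupp x \<union> vsupp y)" by (intro card_mono) auto
  also have "\<dots> \<le> card (vsupp x) + card (vsupp y)" by (rule card_Un_le)
  finally show ?thesis by (simp add: card_supp_def)
qed

lemma sparse_critical_norm_sq_le_paired:
  fixes A :: "'a::{real_normed_field,real_inner}^'n^'m" and As :: "'a^'m^'n"
  assumes adj: "\<And>d r. (A *v d) \<bullet> r = d \<bullet> (As *v r)"
    and crit1: "sparse_critical K x1 g1" and card1: "card_supp x1 = K"
    and crit2: "sparse_critical K x2 g2"
    and grad: "g2 - g1 = As *v (A *v (x2 - x1))"
    and \<sigma>: "\<sigma> ` (vsupp x2 - vsupp x1) \<subseteq> vsupp x1 - vsupp x2" "inj_on \<sigma> (vsupp x2 - vsupp x1)"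
  shows "(norm (A *v (x2 - x1)))\<^sup>2 \<le> (\<Sum>t\<in>vsupp x2 - vsupp x1.
    norm (x1 $ \<sigma> t) * norm (x2 $ t) + norm (x2 $ t) * mag (x1 - g1) (K + 1))"
proof -
  have "(norm (A *v (x2 - x1)))\<^sup>2 = (x2 - x1) \<bullet> (g2 - g1)"
    using adj[of "x2 - x1" "A *v (x2 - x1)"] by (simp add: grad power2_norm_eq_inner)
  also have "\<dots> \<le> (\<Sum>l\<in>vsupp x1 - vsupp x2. norm (x1 $ l) * norm (g2 $ l))
      + (\<Sum>t\<in>vsupp x2 - vsupp x1. norm (x2 $ t) * mag (x1 - g1) (K + 1))"
    using crit1 crit2 sparse_critical_grad_le_mag_Suc[OF crit1 card1]
    by (intro inner_diff_le_sum_sym_diff) (auto simp: sparse_critical_def)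
  also have "\<dots> \<le> (\<Sum>t\<in>vsupp x2 - vsupp x1.
      norm (x1 $ \<sigma> t) * norm (x2 $ t) + norm (x2 $ t) * mag (x1 - g1) (K + 1))"
    using sparse_critical_sum_grad_le_paired[OF crit2 _ \<sigma>, of "\<lambda>l. norm (x1 $ l)"] card1
    by (simp add: sum.distrib card_supp_def)
  finally show ?thesis .
qed

lemma sparse_critical_unique:
  fixes A :: "'a::{real_normed_field,real_inner}^'n^'m" and As :: "'a^'m^'n"
  assumes adj: "\<And>d r. (A *v d) \<bullet> r = d \<bullet> (As *v r)" and K: "1 \<le> K"
    and crit1: "sparse_critical K x1 g1" and card1: "card_supp x1 = K"
    and crit2: "sparse_critical K x2 g2"
    and grad: "g2 - g1 = As *v (A *v (x2 - x1))"
    and gap: "mag (x1 - g1) (K + 1) < (2 * (beta A (2 * K))\<^sup>2 - 1) * mag (x1 - g1) K"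
  shows "x2 = x1"
proof (rule ccontr)
  assume "x2 \<noteq> x1"
  define w where "w = x2 - x1"
  define S where "S = vsupp x1"
  define T where "T = vsupp x2"
  define \<beta> where "\<beta> = beta A (2 * K)"
  have w: "w \<noteq> 0" using \<open>x2 \<noteq> x1\<close> by (simp add: w_def)
  have \<gamma>: "0 < 2 * \<beta>\<^sup>2 - 1"
    using gap mag_nonneg[of "x1 - g1"] unfolding \<beta>_def by (smt (verit) mult_nonpos_nonneg)
  have "card_supp w \<le> 2 * K"
    using card_supp_diff_le[of x2 x1] card1 crit2 by (simp add: w_def sparse_critical_def)
  with beta_sq_mult_le[OF w] have \<beta>_w: "\<beta>\<^sup>2 * (norm w)\<^sup>2 \<le> (norm (A *v w))\<^sup>2"
    by (simp add: \<beta>_def)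
  have "card T \<le> card S"
    using card1 crit2 by (simp add: S_def T_def card_supp_def sparse_critical_def)
  then have "card (T - S) \<le> card (S - T)"
    by (simp add: card_Diff_subset_Int Int_commute)
  then obtain \<sigma> where \<sigma>: "\<sigma> ` (T - S) \<subseteq> S - T" "inj_on \<sigma> (T - S)"
    using card_le_inj[of "T - S" "S - T"] by auto
  have "(norm (A *v w))\<^sup>2
      \<le> (\<Sum>t\<in>T - S. norm (x1 $ \<sigma> t) * norm (x2 $ t) + norm (x2 $ t) * mag (x1 - g1) (K + 1))"
    unfolding w_def S_def T_def
    using sparse_critical_norm_sq_le_paired[OF adj crit1 card1 crit2 grad] \<sigma> by (simp add: S_def T_def)
  also have "\<dots> < \<beta>\<^sup>2 * (norm w)\<^sup>2"
  proof (cases "T - S = {}")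
    case True
    have "0 < \<beta>\<^sup>2" using \<gamma> by linarith
    then show ?thesis using w by (simp add: True)
  next
    case False
    have "mag (x1 - g1) K \<le> norm (x1 $ \<sigma> t)" if "t \<in> T - S" for t
      using \<sigma>(1) that sparse_critical_mag_le_support_entry[OF crit1 card1 K] by (auto simp: S_def)
    then have "(\<Sum>t\<in>T - S. norm (x1 $ \<sigma> t) * norm (x2 $ t) + norm (x2 $ t) * mag (x1 - g1) (K + 1))
        < \<beta>\<^sup>2 * (\<Sum>t\<in>T - S. (norm (x2 $ t))\<^sup>2 + (norm (x1 $ \<sigma> t))\<^sup>2)"
      using False \<gamma> gap by (intro sum_paired_lt) (auto simp: T_def \<beta>_def)
    also have "\<dots> \<le> \<beta>\<^sup>2 * (norm w)\<^sup>2"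
      using sum_paired_sq_le_norm_diff_sq[of \<sigma> x2 x1] \<sigma>
      by (intro mult_left_mono) (auto simp: w_def S_def T_def)
    finally show ?thesis .
  qed
  finally show False using \<beta>_w by simp
qed

lemma stationary_Kreg_card_supp_gt:
  fixes A :: "'a::{real_normed_field,real_inner}^'n^'m" and As :: "'a^'m^'n"
  assumes adj: "\<And>d r. (A *v d) \<bullet> r = d \<bullet> (As *v r)" and K: "1 \<le> K"
    and st1: "stationary (Kreg K A b) x1" and card1: "card_supp x1 = K"
    and gap: "mag ((mat 1 - As ** A) *v x1 + As *v b) (K + 1)
      < (2 * (beta A (2 * K))\<^sup>2 - 1) * mag ((mat 1 - As ** A) *v x1 + As *v b) K"
    and st2: "stationary (Kreg K A b) x2" and ne: "x2 \<noteq> x1"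
  shows "K < card_supp x2"
proof (rule ccontr)
  assume "\<not> K < card_supp x2"
  then have crit2: "sparse_critical K x2 (As *v (A *v x2 - b))"
    by (intro stationary_Kreg_sparse_critical[OF adj K st2]) simp
  have crit1: "sparse_critical K x1 (As *v (A *v x1 - b))"
    using card1 by (intro stationary_Kreg_sparse_critical[OF adj K st1]) simp
  have "(mat 1 - As ** A) *v x1 + As *v b = x1 - As *v (A *v x1 - b)"
    by (simp add: matrix_vector_mult_diff_rdistrib matrix_vector_mult_diff_distrib
        matrix_vector_mul_assoc)
  moreover have "As *v (A *v x2 - b) - As *v (A *v x1 - b) = As *v (A *v (x2 - x1))"
    by (simp add: matrix_vector_mult_diff_distrib)
  ultimately show False
    using sparse_critical_unique[OF adj K crit1 card1 crit2] gap ne by simp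
qed

lemma inner_matrix_vector_transpose: "((A::real^'n^'m) *v d) \<bullet> r = d \<bullet> (transpose A *v r)"
  by (metis dot_lmul_matrix inner_commute transpose_matrix_vector)

lemma inner_matrix_vector_cadj: "((A::complex^'n^'m) *v d) \<bullet> r = d \<bullet> (cadj A *v r)"
proof -
  have "(A *v d) \<bullet> r = (\<Sum>k\<in>UNIV. \<Sum>i\<in>UNIV. (A $ k $ i * d $ i) \<bullet> r $ k)"
    by (simp add: inner_vec_def matrix_vector_mult_def inner_sum_left)
  also have "\<dots> = (\<Sum>i\<in>UNIV. \<Sum>k\<in>UNIV. d $ i \<bullet> (cnj (A $ k $ i) * r $ k))"
    by (subst sum.swap) (simp add: inner_complex_def algebra_simps)
  also have "\<dots> = d \<bullet> (cadj A *v r)"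
    by (simp add: inner_vec_def matrix_vector_mult_def inner_sum_right cadj_def)
  finally show ?thesis .
qed

theorem theorem5p3:
  shows
  "(\<forall>(A::real^'n^'m) (b::real^'m) (K::nat) (x'::real^'n) x''.
      K \<ge> 1 \<and> stationary (Kreg K A b) x' \<and> card_supp x' = K \<and>
      (let z' = (mat 1 - transpose A ** A) *v x' + transpose A *v b in
         mag z' (K + 1) < (2 * (beta A (2 * K))\<^sup>2 - 1) * mag z' K) \<and>
      stationary (Kreg K A b) x'' \<and> x'' \<noteq> x'
      \<longrightarrow> card_supp x'' > K)
   \<and>
   (\<forall>(A::complex^'n^'m) (b::complex^'m) (K::nat) (x'::complex^'n) x''.
      K \<ge> 1 \<and> stationary (Kreg K A b) x' \<and> card_supp x' = K \<and>
      (let z' = (mat 1 - cadj A ** A) *v x' + cadj A *v b in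
         mag z' (K + 1) < (2 * (beta A (2 * K))\<^sup>2 - 1) * mag z' K) \<and>
      stationary (Kreg K A b) x'' \<and> x'' \<noteq> x'
      \<longrightarrow> card_supp x'' > K)"
  unfolding Let_def
  using stationary_Kreg_card_supp_gt[OF inner_matrix_vector_transpose]
    stationary_Kreg_card_supp_gt[OF inner_matrix_vector_cadj]
  by blast

end
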